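(* Let $G$ be a group of order $n\ge 2$ and let $m\ge 3$ be an odd integer. Let $\Gamma$ be the digraph with vertex set $G\times G\times\mathbb{Z}_m$ in which $(x,y,i)\to(u,v,j)$ if and only if at least one of the following holds: (1) $x=u$, $i=j$ and $y\neq v$; (2) $y=v$, $i=j$ and $x\neq u$; (3) $u=xy$ and $j\in\{i+1,i+2,\dots,i+\tfrac{m-1}{2}\}$ (indices mod $m$); (4) $v=xy$ and $j\in\{i-\tfrac{m-1}{2},\dots,i-2,i-1\}$ (indices mod $m$). Then $\Gamma$ is a directed strongly regular graph with parameters $(v,k,t,\lambda,\mu)=(mn^2,\ mn+n-2,\ 2n+m-3,\ n+m-3,\ m+1)$.
   Context: A digraph here has no loops and no multiple arcs; its adjacency matrix $A$ (rows/columns indexed by the vertices) has $A_{xy}=1$ iff $x\to y$. A directed strongly regular graph with parameters $(v,k,t,\lambda,\mu)$ is a digraph on $v$ vertices whose adjacency matrix $A$ satisfies $A^2=tI+\lambda A+\mu(J-I-A)$ and $AJ=JA=kJ$, where $I$ is the identity and $J$ the all-ones matrix. Products $xy$ are taken in $G$. *)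

theory Defs
  imports "HOL-Algebra.Group"
begin

text \<open>A digraph on a finite vertex set V given by its arc relation adj (adj x y iff x -> y,
  i.e. A_xy = 1). Directed strongly regular graph: no loops, and the matrix identities
  A^2 = t I + lambda A + mu (J - I - A), AJ = JA = kJ, written out entrywise:
  (A^2)_xz is the number of w with x -> w -> z; (AJ)_x is the out-degree, (JA)_z the in-degree.\<close>

definition dsrg :: "'v set \<Rightarrow> ('v \<Rightarrow> 'v \<Rightarrow> bool) \<Rightarrow> nat \<Rightarrow> nat \<Rightarrow> nat \<Rightarrow> nat \<Rightarrow> nat \<Rightarrow> bool" where
  "dsrg V adj v k t lam mu \<longleftrightarrow>
     finite V \<and> card V = v \<and>
     (\<forall>x\<in>V. \<not> adj x x) \<and>
     (\<forall>x\<in>V. card {y\<in>V. adj x y} = k) \<and>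
     (\<forall>y\<in>V. card {x\<in>V. adj x y} = k) \<and>
     (\<forall>x\<in>V. \<forall>z\<in>V. card {w\<in>V. adj x w \<and> adj w z} =
         (if x = z then t else if adj x z then lam else mu))"

text \<open>The digraph of the theorem: vertices G x G x Z_m (Z_m represented by {0..<m}).\<close>

definition gamma_verts :: "('a, 'b) monoid_scheme \<Rightarrow> nat \<Rightarrow> ('a \<times> 'a \<times> nat) set" where
  "gamma_verts G m = carrier G \<times> carrier G \<times> {0..<m}"

definition gamma_adj :: "('a, 'b) monoid_scheme \<Rightarrow> nat \<Rightarrow> ('a \<times> 'a \<times> nat) \<Rightarrow> ('a \<times> 'a \<times> nat) \<Rightarrow> bool" where
  "gamma_adj G m p q = (case p of (x, y, i) \<Rightarrow> case q of (u, v, j) \<Rightarrow>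
      (x = u \<and> i = j \<and> y \<noteq> v) \<or>
      (y = v \<and> i = j \<and> x \<noteq> u) \<or>
      (u = x \<otimes>\<^bsub>G\<^esub> y \<and> (\<exists>d\<in>{1..(m - 1) div 2}. j = (i + d) mod m)) \<or>
      (v = x \<otimes>\<^bsub>G\<^esub> y \<and> (\<exists>d\<in>{1..(m - 1) div 2}. i = (j + d) mod m)))"

end

theory Submission
  imports Defs
begin

text \<open>Count layer by layer, the layers being \<open>G \<times> G \<times> {l}\<close>. Inside a layer the arcs form the
  rook's graph on \<open>G \<times> G\<close>; between layers, the circulant tournament on \<open>\<int>\<^sub>m\<close> (\<open>m\<close> odd)
  decides whether \<open>(x, y, i)\<close> sends arcs into layer \<open>l\<close> along the first coordinate
  (\<open>u = x y\<close>) or the second (\<open>v = x y\<close>). So out- and in-neighbourhoods meet every other layer in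
  \<open>n\<close> vertices. For 2-paths \<open>p \<rightarrow> w \<rightarrow> z\<close>, a middle layer different from those of \<open>p\<close> and
  \<open>z\<close> prescribes one coordinate of \<open>w\<close> and the product of its coordinates, hence contributes
  exactly one path; the layers of \<open>p\<close> and \<open>z\<close> contribute rook's-graph counts.\<close>

definition cyclic_ahead :: "nat \<Rightarrow> nat \<Rightarrow> nat \<Rightarrow> bool" where
  "cyclic_ahead m i j \<longleftrightarrow> (\<exists>d\<in>{1..(m - 1) div 2}. j = (i + d) mod m)"

definition rook_adj :: "'a \<times> 'a \<Rightarrow> 'a \<times> 'a \<Rightarrow> bool" where
  "rook_adj p q \<longleftrightarrow> (fst p = fst q \<and> snd p \<noteq> snd q) \<or> (snd p = snd q \<and> fst p \<noteq> fst q)"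

lemma rook_adj_sym: "rook_adj p q \<longleftrightarrow> rook_adj q p"
  by (auto simp: rook_adj_def)

lemma cyclic_ahead_iff:
  assumes "odd m" "i < m" "j < m"
  shows "cyclic_ahead m i j \<longleftrightarrow>
    (i < j \<and> j - i \<le> (m - 1) div 2) \<or> (j < i \<and> i - j > (m - 1) div 2)"
proof
  assume "cyclic_ahead m i j"
  then obtain d where d: "d \<in> {1..(m - 1) div 2}" "j = (i + d) mod m"
    by (auto simp: cyclic_ahead_def)
  show "(i < j \<and> j - i \<le> (m - 1) div 2) \<or> (j < i \<and> i - j > (m - 1) div 2)"
  proof (cases "i + d < m")
    case True
    then show ?thesis using d by simp
  next
    case False
    with d assms have "j = i + d - m"
      by (simp add: le_mod_geq)
    then show ?thesis using d False assms by auto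
  qed
next
  assume "(i < j \<and> j - i \<le> (m - 1) div 2) \<or> (j < i \<and> i - j > (m - 1) div 2)"
  then consider "i < j" "j - i \<le> (m - 1) div 2" | "j < i" "i - j > (m - 1) div 2"
    by blast
  then show "cyclic_ahead m i j"
  proof cases
    case 1
    then show ?thesis unfolding cyclic_ahead_def using assms
      by (intro bexI[of _ "j - i"]) auto
  next
    case 2
    then have "j = (i + (m + j - i)) mod m" "m + j - i \<in> {1..(m - 1) div 2}"
      using assms by (auto elim!: oddE)
    then show ?thesis unfolding cyclic_ahead_def by blast
  qed
qed

lemma cyclic_ahead_irrefl: "odd m \<Longrightarrow> i < m \<Longrightarrow> \<not> cyclic_ahead m i i"
  by (simp add: cyclic_ahead_iff)

lemma cyclic_ahead_asym_total:
  "odd m \<Longrightarrow> i < m \<Longrightarrow> j < m \<Longrightarrow> i \<noteq> j \<Longrightarrow> cyclic_ahead m i j \<longleftrightarrow> \<not> cyclic_ahead m j i"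
  by (auto simp: cyclic_ahead_iff elim!: oddE)

lemma gamma_adj_iff:
  "gamma_adj G m (x, y, i) (u, v, j) \<longleftrightarrow>
     i = j \<and> rook_adj (x, y) (u, v) \<or>
     cyclic_ahead m i j \<and> u = x \<otimes>\<^bsub>G\<^esub> y \<or> cyclic_ahead m j i \<and> v = x \<otimes>\<^bsub>G\<^esub> y"
  by (auto simp: gamma_adj_def cyclic_ahead_def rook_adj_def)

lemma gamma_adj_same_layer:
  "odd m \<Longrightarrow> i < m \<Longrightarrow> gamma_adj G m (x, y, i) (u, v, i) \<longleftrightarrow> rook_adj (x, y) (u, v)"
  by (simp add: gamma_adj_iff cyclic_ahead_irrefl)

lemma gamma_adj_other_layer:
  assumes "odd m" "i < m" "j < m" "i \<noteq> j"
  shows "gamma_adj G m (x, y, i) (u, v, j) \<longleftrightarrow>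
    (if cyclic_ahead m i j then u else v) = x \<otimes>\<^bsub>G\<^esub> y"
  using cyclic_ahead_asym_total[OF assms] assms(4) by (auto simp: gamma_adj_iff)

lemma card_product_by_layers:
  assumes "finite C" "finite L"
  shows "card {w \<in> C \<times> C \<times> L. P w} = (\<Sum>l\<in>L. card {ab \<in> C \<times> C. P (fst ab, snd ab, l)})"
proof -
  have "card {w \<in> C \<times> C \<times> L. P w} = card (SIGMA l:L. {ab \<in> C \<times> C. P (fst ab, snd ab, l)})"
    by (rule bij_betw_same_card[of "\<lambda>(a, b, l). (l, (a, b))"])
       (auto simp: bij_betw_def inj_on_def image_def)
  also have "\<dots> = (\<Sum>l\<in>L. card {ab \<in> C \<times> C. P (fst ab, snd ab, l)})"
    using assms by (simp add: card_SigmaI)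
  finally show ?thesis .
qed

lemma sum_eq_except_one:
  assumes "finite A" "i \<in> A" "\<And>l. l \<in> A \<Longrightarrow> l \<noteq> i \<Longrightarrow> g l = c"
  shows "sum g A = g i + (card A - 1) * (c :: nat)"
proof -
  have "sum g A = g i + sum g (A - {i})"
    using assms by (simp add: sum.remove)
  also have "sum g (A - {i}) = (card A - 1) * c"
    using assms by (simp add: sum.cong[of _ _ g "\<lambda>_. c"])
  finally show ?thesis .
qed

lemma sum_eq_except_two:
  assumes "finite A" "i \<in> A" "j \<in> A" "i \<noteq> j" "\<And>l. l \<in> A \<Longrightarrow> l \<noteq> i \<Longrightarrow> l \<noteq> j \<Longrightarrow> g l = c"
  shows "sum g A = g i + g j + (card A - 2) * (c :: nat)"
proof -
  have "sum g A = g i + sum g (A - {i})"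
    using assms by (simp add: sum.remove)
  also have "sum g (A - {i}) = g j + (card (A - {i}) - 1) * c"
    by (rule sum_eq_except_one) (use assms in auto)
  also have "card (A - {i}) - 1 = card A - 2"
    using assms by simp
  finally show ?thesis
    by simp
qed

subsection \<open>Counting in the rook's graph\<close>

lemma card_rook_neighbours:
  assumes "finite C" "x \<in> C" "y \<in> C"
  shows "card {ab \<in> C \<times> C. rook_adj (x, y) ab} = 2 * (card C - 1)"
proof -
  have "{ab \<in> C \<times> C. rook_adj (x, y) ab} = {x} \<times> (C - {y}) \<union> (C - {x}) \<times> {y}"
    using assms by (auto simp: rook_adj_def)
  moreover have "card ({x} \<times> (C - {y}) \<union> (C - {x}) \<times> {y}) = card ({x} \<times> (C - {y})) + card ((C - {x}) \<times> {y})"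
    using assms by (intro card_Un_disjoint) auto
  ultimately show ?thesis
    using assms by (simp add: card_cartesian_product)
qed

lemma card_rook_common_neighbours:
  assumes "finite C" "x \<in> C" "y \<in> C" "u \<in> C" "v \<in> C"
  shows "card {ab \<in> C \<times> C. rook_adj (x, y) ab \<and> rook_adj ab (u, v)} =
    (if (x, y) = (u, v) then 2 * (card C - 1) else if rook_adj (x, y) (u, v) then card C - 2 else 2)"
proof -
  consider "(x, y) = (u, v)" | "x = u" "y \<noteq> v" | "y = v" "x \<noteq> u" | "x \<noteq> u" "y \<noteq> v"
    by auto
  then show ?thesis
  proof cases
    case 1
    then show ?thesis
      using card_rook_neighbours[OF assms(1-3)] by (simp add: rook_adj_sym)
  next
    case 2
    then have "{ab \<in> C \<times> C. rook_adj (x, y) ab \<and> rook_adj ab (u, v)} = {x} \<times> (C - {y, v})"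
      using assms by (auto simp: rook_adj_def)
    then show ?thesis
      using 2 assms by (simp add: card_cartesian_product card_Diff_subset rook_adj_def)
  next
    case 3
    then have "{ab \<in> C \<times> C. rook_adj (x, y) ab \<and> rook_adj ab (u, v)} = (C - {x, u}) \<times> {y}"
      using assms by (auto simp: rook_adj_def)
    then show ?thesis
      using 3 assms by (simp add: card_cartesian_product card_Diff_subset rook_adj_def)
  next
    case 4
    then have "{ab \<in> C \<times> C. rook_adj (x, y) ab \<and> rook_adj ab (u, v)} = {(x, v), (u, y)}"
      using assms by (auto simp: rook_adj_def)
    then show ?thesis
      using 4 by (simp add: rook_adj_def)
  qed
qed

lemma card_fst_eq_rook_adj:
  assumes "finite C" "c \<in> C" "u \<in> C" "v \<in> C"
  shows "card {ab \<in> C \<times> C. fst ab = c \<and> rook_adj ab (u, v)} = (if c = u then card C - 1 else 1)"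
proof -
  have "{ab \<in> C \<times> C. fst ab = c \<and> rook_adj ab (u, v)} = (if c = u then {u} \<times> (C - {v}) else {(c, v)})"
    using assms by (auto simp: rook_adj_def)
  then show ?thesis
    using assms by (simp add: card_cartesian_product)
qed

lemma card_snd_eq_rook_adj:
  assumes "finite C" "c \<in> C" "u \<in> C" "v \<in> C"
  shows "card {ab \<in> C \<times> C. snd ab = c \<and> rook_adj ab (u, v)} = (if c = v then card C - 1 else 1)"
proof -
  have "{ab \<in> C \<times> C. snd ab = c \<and> rook_adj ab (u, v)} = (if c = v then (C - {u}) \<times> {v} else {(u, c)})"
    using assms by (auto simp: rook_adj_def)
  then show ?thesis
    using assms by (simp add: card_cartesian_product)
qed

subsection \<open>Counting factorisations in a group\<close>

context group
begin

lemma mult_inv_cancel_left [simp]: "x \<in> carrier G \<Longrightarrow> u \<in> carrier G \<Longrightarrow> x \<otimes> (inv x \<otimes> u) = u"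
  by (simp add: m_assoc[symmetric])

lemma mult_inv_cancel_right [simp]: "x \<in> carrier G \<Longrightarrow> u \<in> carrier G \<Longrightarrow> u \<otimes> inv x \<otimes> x = u"
  by (simp add: m_assoc)

lemma card_factorisations:
  assumes "finite (carrier G)" "u \<in> carrier G"
  shows "card {ab \<in> carrier G \<times> carrier G. fst ab \<otimes> snd ab = u} = card (carrier G)"
proof -
  have "{ab \<in> carrier G \<times> carrier G. fst ab \<otimes> snd ab = u} = (\<lambda>a. (a, inv a \<otimes> u)) ` carrier G"
    using assms by (auto simp: inv_solve_left image_def)
  moreover have "inj_on (\<lambda>a. (a, inv a \<otimes> u)) (carrier G)"
    by (auto simp: inj_on_def)
  ultimately show ?thesis
    by (simp add: card_image)
qed

lemma card_factorisations_fst_eq: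
  assumes "c \<in> carrier G" "u \<in> carrier G"
  shows "card {ab \<in> carrier G \<times> carrier G. fst ab = c \<and> fst ab \<otimes> snd ab = u} = 1"
proof -
  have "{ab \<in> carrier G \<times> carrier G. fst ab = c \<and> fst ab \<otimes> snd ab = u} = {(c, inv c \<otimes> u)}"
    using assms by (auto simp: inv_solve_left)
  then show ?thesis by simp
qed

lemma card_factorisations_snd_eq:
  assumes "c \<in> carrier G" "u \<in> carrier G"
  shows "card {ab \<in> carrier G \<times> carrier G. snd ab = c \<and> fst ab \<otimes> snd ab = u} = 1"
proof -
  have "{ab \<in> carrier G \<times> carrier G. snd ab = c \<and> fst ab \<otimes> snd ab = u} = {(u \<otimes> inv c, c)}"
    using assms by (auto simp: inv_solve_right)
  then show ?thesis by simp
qed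

text \<open>Moving along a row or a column changes the product, and each of the two moves reaches
  every other product exactly once.\<close>

lemma card_factorisations_rook_adj:
  assumes "x \<in> carrier G" "y \<in> carrier G" "u \<in> carrier G"
  shows "card {ab \<in> carrier G \<times> carrier G. rook_adj (x, y) ab \<and> fst ab \<otimes> snd ab = u} =
    (if u = x \<otimes> y then 0 else 2)"
proof -
  have "{ab \<in> carrier G \<times> carrier G. rook_adj (x, y) ab \<and> fst ab \<otimes> snd ab = u} =
    (if u = x \<otimes> y then {} else {(x, inv x \<otimes> u), (u \<otimes> inv y, y)})"
    using assms
    by (auto simp: rook_adj_def inv_solve_left inv_solve_right inv_solve_left' inv_solve_right')
  moreover have "x \<noteq> u \<otimes> inv y" if "u \<noteq> x \<otimes> y"
    using that assms by (auto simp: inv_solve_right)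
  ultimately show ?thesis
    by auto
qed

end

locale gamma_digraph = group +
  fixes m :: nat
  assumes finite_carrier: "finite (carrier G)"
    and odd_m: "odd m"
begin

lemma card_carrier_pos: "0 < card (carrier G)"
  using finite_carrier one_closed card_gt_0_iff by blast

lemma card_by_layers:
  "card {w \<in> gamma_verts G m. P w} =
    (\<Sum>l\<in>{0..<m}. card {ab \<in> carrier G \<times> carrier G. P (fst ab, snd ab, l)})"
  unfolding gamma_verts_def by (rule card_product_by_layers[OF finite_carrier]) simp

lemma card_out_neighbours_layer:
  assumes "x \<in> carrier G" "y \<in> carrier G" "i < m" "l < m"
  shows "card {ab \<in> carrier G \<times> carrier G. gamma_adj G m (x, y, i) (fst ab, snd ab, l)} =
    (if l = i then 2 * (card (carrier G) - 1) else card (carrier G))"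
proof (cases "l = i")
  case True
  then show ?thesis
    using assms card_rook_neighbours[OF finite_carrier assms(1,2)]
    by (simp add: gamma_adj_same_layer[OF odd_m])
next
  case False
  then have "{ab \<in> carrier G \<times> carrier G. gamma_adj G m (x, y, i) (fst ab, snd ab, l)} =
    (if cyclic_ahead m i l then {x \<otimes> y} \<times> carrier G else carrier G \<times> {x \<otimes> y})"
    using assms by (auto simp: gamma_adj_other_layer[OF odd_m])
  then show ?thesis
    using False by (simp add: card_cartesian_product)
qed

lemma card_in_neighbours_layer:
  assumes "u \<in> carrier G" "v \<in> carrier G" "j < m" "l < m"
  shows "card {ab \<in> carrier G \<times> carrier G. gamma_adj G m (fst ab, snd ab, l) (u, v, j)} =
    (if l = j then 2 * (card (carrier G) - 1) else card (carrier G))"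
proof (cases "l = j")
  case True
  then show ?thesis
    using assms card_rook_neighbours[OF finite_carrier assms(1,2)]
    by (simp add: gamma_adj_same_layer[OF odd_m] rook_adj_sym[of _ "(u, v)"])
next
  case False
  then have "{ab \<in> carrier G \<times> carrier G. gamma_adj G m (fst ab, snd ab, l) (u, v, j)} =
    {ab \<in> carrier G \<times> carrier G. fst ab \<otimes> snd ab = (if cyclic_ahead m l j then u else v)}"
    using assms by (auto simp: gamma_adj_other_layer[OF odd_m])
  then show ?thesis
    using False assms by (simp add: card_factorisations finite_carrier)
qed

lemma sum_layer_degrees:
  assumes "i < m" "\<And>l. l < m \<Longrightarrow> f l = (if l = i then 2 * (card (carrier G) - 1) else card (carrier G))"
  shows "(\<Sum>l\<in>{0..<m}. f l) = m * card (carrier G) + card (carrier G) - 2"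
proof -
  have "(\<Sum>l\<in>{0..<m}. f l) = 2 * (card (carrier G) - 1) + (m - 1) * card (carrier G)"
    using assms by (subst sum_eq_except_one[where i = i]) auto
  then show ?thesis
    using card_carrier_pos \<open>i < m\<close> by (cases m) (auto simp: algebra_simps)
qed

lemma card_out_neighbours:
  assumes "p \<in> gamma_verts G m"
  shows "card {w \<in> gamma_verts G m. gamma_adj G m p w} = m * card (carrier G) + card (carrier G) - 2"
proof -
  obtain x y i where "p = (x, y, i)" "x \<in> carrier G" "y \<in> carrier G" "i < m"
    using assms by (auto simp: gamma_verts_def)
  then show ?thesis
    unfolding card_by_layers by (intro sum_layer_degrees) (simp_all add: card_out_neighbours_layer)
qed

lemma card_in_neighbours:
  assumes "z \<in> gamma_verts G m"
  shows "card {w \<in> gamma_verts G m. gamma_adj G m w z} = m * card (carrier G) + card (carrier G) - 2"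
proof -
  obtain u v j where "z = (u, v, j)" "u \<in> carrier G" "v \<in> carrier G" "j < m"
    using assms by (auto simp: gamma_verts_def)
  then show ?thesis
    unfolding card_by_layers by (intro sum_layer_degrees) (simp_all add: card_in_neighbours_layer)
qed

lemma card_paths_other_layer:
  assumes "x \<in> carrier G" "y \<in> carrier G" "u \<in> carrier G" "v \<in> carrier G"
    and "i < m" "j < m" "l < m" "l \<noteq> i" "l \<noteq> j"
  shows "card {ab \<in> carrier G \<times> carrier G.
    gamma_adj G m (x, y, i) (fst ab, snd ab, l) \<and> gamma_adj G m (fst ab, snd ab, l) (u, v, j)} = 1"
proof -
  have "{ab \<in> carrier G \<times> carrier G.
      gamma_adj G m (x, y, i) (fst ab, snd ab, l) \<and> gamma_adj G m (fst ab, snd ab, l) (u, v, j)} =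
    {ab \<in> carrier G \<times> carrier G. (if cyclic_ahead m i l then fst ab else snd ab) = x \<otimes> y \<and>
      fst ab \<otimes> snd ab = (if cyclic_ahead m l j then u else v)}"
    using assms by (auto simp: gamma_adj_other_layer[OF odd_m])
  then show ?thesis
    using assms
    by (cases "cyclic_ahead m i l"; cases "cyclic_ahead m l j")
      (simp_all add: card_factorisations_fst_eq card_factorisations_snd_eq)
qed

lemma card_paths_within_layer:
  assumes "x \<in> carrier G" "y \<in> carrier G" "u \<in> carrier G" "v \<in> carrier G" "i < m"
  shows "card {ab \<in> carrier G \<times> carrier G.
    gamma_adj G m (x, y, i) (fst ab, snd ab, i) \<and> gamma_adj G m (fst ab, snd ab, i) (u, v, i)} =
    (if (x, y) = (u, v) then 2 * (card (carrier G) - 1)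
     else if rook_adj (x, y) (u, v) then card (carrier G) - 2 else 2)"
  using assms card_rook_common_neighbours[OF finite_carrier assms(1-4)]
  by (simp add: gamma_adj_same_layer[OF odd_m])

lemma card_paths_source_layer:
  assumes "x \<in> carrier G" "y \<in> carrier G" "u \<in> carrier G" "v \<in> carrier G"
    and "i < m" "j < m" "i \<noteq> j"
  shows "card {ab \<in> carrier G \<times> carrier G.
    gamma_adj G m (x, y, i) (fst ab, snd ab, i) \<and> gamma_adj G m (fst ab, snd ab, i) (u, v, j)} =
    (if (if cyclic_ahead m i j then u else v) = x \<otimes> y then 0 else 2)"
proof -
  have "{ab \<in> carrier G \<times> carrier G.
      gamma_adj G m (x, y, i) (fst ab, snd ab, i) \<and> gamma_adj G m (fst ab, snd ab, i) (u, v, j)} =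
    {ab \<in> carrier G \<times> carrier G.
      rook_adj (x, y) ab \<and> fst ab \<otimes> snd ab = (if cyclic_ahead m i j then u else v)}"
    using assms by (auto simp: gamma_adj_same_layer[OF odd_m] gamma_adj_other_layer[OF odd_m])
  then show ?thesis
    using assms by (simp add: card_factorisations_rook_adj)
qed

lemma card_paths_target_layer:
  assumes "x \<in> carrier G" "y \<in> carrier G" "u \<in> carrier G" "v \<in> carrier G"
    and "i < m" "j < m" "i \<noteq> j"
  shows "card {ab \<in> carrier G \<times> carrier G.
    gamma_adj G m (x, y, i) (fst ab, snd ab, j) \<and> gamma_adj G m (fst ab, snd ab, j) (u, v, j)} =
    (if (if cyclic_ahead m i j then u else v) = x \<otimes> y then card (carrier G) - 1 else 1)"
proof -
  have "{ab \<in> carrier G \<times> carrier G.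
      gamma_adj G m (x, y, i) (fst ab, snd ab, j) \<and> gamma_adj G m (fst ab, snd ab, j) (u, v, j)} =
    {ab \<in> carrier G \<times> carrier G.
      (if cyclic_ahead m i j then fst ab else snd ab) = x \<otimes> y \<and> rook_adj ab (u, v)}"
    using assms by (auto simp: gamma_adj_same_layer[OF odd_m] gamma_adj_other_layer[OF odd_m])
  then show ?thesis
    using assms finite_carrier
    by (cases "cyclic_ahead m i j") (auto simp: card_fst_eq_rook_adj card_snd_eq_rook_adj)
qed

lemma card_paths:
  assumes "p \<in> gamma_verts G m" "z \<in> gamma_verts G m"
  shows "card {w \<in> gamma_verts G m. gamma_adj G m p w \<and> gamma_adj G m w z} =
    (if p = z then 2 * card (carrier G) + m - 3
     else if gamma_adj G m p z then card (carrier G) + m - 3 else m + 1)"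
proof -
  obtain x y i where p: "p = (x, y, i)" "x \<in> carrier G" "y \<in> carrier G" "i < m"
    using assms by (auto simp: gamma_verts_def)
  obtain u v j where z: "z = (u, v, j)" "u \<in> carrier G" "v \<in> carrier G" "j < m"
    using assms by (auto simp: gamma_verts_def)
  define g where "g l = card {ab \<in> carrier G \<times> carrier G.
    gamma_adj G m p (fst ab, snd ab, l) \<and> gamma_adj G m (fst ab, snd ab, l) z}" for l
  have paths: "card {w \<in> gamma_verts G m. gamma_adj G m p w \<and> gamma_adj G m w z} = sum g {0..<m}"
    unfolding g_def by (rule card_by_layers)
  have other: "g l = 1" if "l \<in> {0..<m}" "l \<noteq> i" "l \<noteq> j" for l
    unfolding g_def p z using that p z by (simp add: card_paths_other_layer)
  have n_pos: "0 < card (carrier G)"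
    by (rule card_carrier_pos)
  show ?thesis
  proof (cases "i = j")
    case True
    have "sum g {0..<m} = g i + (m - 1)"
      using other p True by (subst sum_eq_except_one[where i = i and c = 1]) auto
    moreover have "g i = (if (x, y) = (u, v) then 2 * (card (carrier G) - 1)
        else if rook_adj (x, y) (u, v) then card (carrier G) - 2 else 2)"
      unfolding g_def p z using p z True by (simp add: card_paths_within_layer)
    moreover have "2 \<le> card (carrier G)" if "rook_adj (x, y) (u, v)"
      using that p z card_mono[OF finite_carrier, of "{x, u}"] card_mono[OF finite_carrier, of "{y, v}"]
      by (auto simp: rook_adj_def)
    ultimately show ?thesis
      unfolding paths using p z True n_pos
      by (auto simp: gamma_adj_same_layer[OF odd_m])
  next
    case False
    have "sum g {0..<m} = g i + g j + (m - 2)"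
      using other p z False by (subst sum_eq_except_two[where i = i and j = j and c = 1]) auto
    moreover have "g i = (if (if cyclic_ahead m i j then u else v) = x \<otimes> y then 0 else 2)"
      unfolding g_def p z using p z False by (simp add: card_paths_source_layer)
    moreover have "g j = (if (if cyclic_ahead m i j then u else v) = x \<otimes> y
        then card (carrier G) - 1 else 1)"
      unfolding g_def p z using p z False by (simp add: card_paths_target_layer)
    moreover have "2 \<le> m"
      using p z False by auto
    ultimately show ?thesis
      unfolding paths using p z False n_pos
      by (auto simp: gamma_adj_other_layer[OF odd_m])
  qed
qed

end

theorem mainTheorem1:
  fixes G :: "('a, 'b) monoid_scheme" and n m :: nat
  assumes "group G" and "finite (carrier G)" and "card (carrier G) = n" and "n \<ge> 2"
    and "odd m" and "m \<ge> 3"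
  shows "dsrg (gamma_verts G m) (gamma_adj G m)
           (m * n ^ 2) (m * n + n - 2) (2 * n + m - 3) (n + m - 3) (m + 1)"
proof -
  interpret gamma_digraph G m
    using assms by (simp add: gamma_digraph_def gamma_digraph_axioms_def)
  have "card (gamma_verts G m) = m * n ^ 2"
    using assms(3) by (simp add: gamma_verts_def card_cartesian_product power2_eq_square)
  moreover have "\<not> gamma_adj G m p p" if "p \<in> gamma_verts G m" for p
    using that odd_m by (auto simp: gamma_verts_def gamma_adj_same_layer rook_adj_def)
  ultimately show ?thesis
    unfolding dsrg_def
    using card_out_neighbours card_in_neighbours card_paths assms(3) finite_carrier
    by (simp add: gamma_verts_def)
qed

end
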